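(* Let $T\in\mathcal{C}^{-\infty}(\mathbb{R})$, let $k$ be the minimum natural number for which there exists $f\in\mathcal{C}^1(\mathbb{R})$ with $T=\partial^kf$ (distributional derivative), let $f$ be such a function, and let $\widetilde{T}=D^kf^*$ (where $f^*$ is restricted to $[-\beta,\beta]$). Then for every test function $\varphi\in\mathcal{D}(\mathbb{R})$, $$\int^*\widetilde{T}(x)\varphi^*(x)\,dx=\langle T,\varphi\rangle.$$
   Context: $\mathcal{D}(\mathbb{R})$ is the space of smooth compactly supported functions, $\mathcal{D}'(\mathbb{R})$ the distributions, and $\mathcal{C}^{-\infty}(\mathbb{R})=\{T\in\mathcal{D}'(\mathbb{R}):\exists k\in\mathbb{N},\ \exists f\in\mathcal{C}^0(\mathbb{R}),\ T=\partial^kf\}$. Framework (Λ-limits / nonstandard analysis): $\mathfrak{X}=\mathcal{P}_{fin}(\mathfrak{F}(\mathbb{R},\mathbb{R}))$ directed by inclusion; $\mathbb{R}^*\supset\mathbb{R}$ is a non-Archimedean ordered field of Λ-limits of nets $\mathfrak{X}\to\mathbb{R}$; internal sets/functions, natural extensions $E^*,f^*$, hyperfinite sums are defined via Λ-limits; $\int^*$ is the natural extension of the Lebesgue integral. For $\lambda\in\mathfrak{X}$, $V_\lambda$ is the span of $\lambda$; an internal $u=\lim_{\lambda\uparrow\Lambda}u_\lambda$ is an ultrafunction if $u_\lambda\in V_\lambda$ for all $\lambda$; for a vector space $W$ of real functions, $\widetilde{W}=W^*\cap\{\text{ultrafunctions}\}$. Grid: a positive infinite $\beta\in\mathbb{R}^*$,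 a hyperfinite $\Gamma=\{\gamma_0<\dots<\gamma_\ell\}\subset\mathbb{R}^*$ with $\gamma_0=-\beta$, $\gamma_\ell=\beta$, $0<\gamma_{j+1}-\gamma_j<\eta$ for a fixed infinitesimal $\eta$, and $\mathbb{R}\subseteq\Gamma$; $\mathbb{I}_j=(\gamma_j,\gamma_{j+1})_{\mathbb{R}^*}$ with characteristic function $\chi_j$. $\mathfrak{U}(\mathbb{R})$: functions $u:[-\beta,\beta]\to\mathbb{R}^*$ of the form $\sum_{j=0}^{\ell-1}v_j\chi_j$ with $v_j\in\widetilde{\mathcal{C}^1(\mathbb{R})}$, with the $L^2$ inner product $\int^*uv$ (elements extended by $0$ outside $[-\beta,\beta]$). $u(\gamma_j^\pm)$ are internal one-sided limits; values at grid points: $u(\gamma_j)=\tfrac12(u(\gamma_j^+)+u(\gamma_j^-))$ for $1\le j\le\ell-1$, $u(-\beta)=u(\gamma_0^+)$, $u(\beta)=u(\gamma_\ell^-)$. For $q\in[-\beta,\beta]$, $\delta_q$ is the unique element of $\mathfrak{U}(\mathbb{R})$ with $\int^*w\delta_q=w(q)$ for all $w\in\mathfrak{U}(\mathbb{R})$. Derivative $D:\mathfrak{U}(\mathbb{R})\to\mathfrak{U}(\mathbb{R})$: for $u=\sum_jv_j\chi_j$, $u'=\sum_jv_j'\chi_j$, $P_{\mathfrak{U}}$ the orthogonal projection onto $\mathfrak{U}(\mathbb{R})$, $\triangle u(\gamma_j)=u(\gamma_j^+)-u(\gamma_j^-)$, and $Du=P_{\mathfrak{U}}u'+\sum_{j=1}^{\ell-1}\triangle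 u(\gamma_j)\delta_{\gamma_j}$; $D^k$ is its $k$-fold iterate. *)

theory Defs
  imports "HOL-Analysis.Analysis"
begin

(* The Lambda-limit framework is modelled componentwise: an internal object is a
   net indexed by lambda in X = finite sets of real functions, and two internal
   objects are equal iff they agree eventually along a fine ultrafilter U on X. *)

definition fine_ultra :: "(real \<Rightarrow> real) set filter \<Rightarrow> bool" where
  "fine_ultra U \<longleftrightarrow> U \<noteq> bot \<and> (\<forall>P. eventually P U \<or> eventually (\<lambda>l. \<not> P l) U)
     \<and> eventually finite U \<and> (\<forall>a. finite a \<longrightarrow> eventually (\<lambda>l. a \<subseteq> l) U)"

definition C1 :: "(real \<Rightarrow> real) set" where
  "C1 = {f. \<exists>f'. (\<forall>x. (f has_real_derivative f' x) (at x)) \<and> continuous_on UNIV f'}"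

definition test_fun :: "(real \<Rightarrow> real) \<Rightarrow> bool" where
  "test_fun \<phi> \<longleftrightarrow> (\<forall>n x. (deriv ^^ n) \<phi> differentiable (at x)) \<and> compact (closure {x. \<phi> x \<noteq> 0})"

definition dist_deriv_eq :: "((real \<Rightarrow> real) \<Rightarrow> real) \<Rightarrow> nat \<Rightarrow> (real \<Rightarrow> real) \<Rightarrow> bool" where
  "dist_deriv_eq T k f \<longleftrightarrow>
     (\<forall>\<phi>. test_fun \<phi> \<longrightarrow> T \<phi> = (-1) ^ k * (LINT x|lborel. f x * (deriv ^^ k) \<phi> x))"

definition Cminf :: "((real \<Rightarrow> real) \<Rightarrow> real) \<Rightarrow> bool" where
  "Cminf T \<longleftrightarrow> (\<exists>k f. continuous_on UNIV f \<and> dist_deriv_eq T k f)"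

definition Vspan :: "(real \<Rightarrow> real) set \<Rightarrow> (real \<Rightarrow> real) set" where
  "Vspan l = {u. \<exists>c. u = (\<lambda>x. \<Sum>g\<in>l. c g * g x)}"

definition grid_pts :: "real set \<Rightarrow> real list" where
  "grid_pts G = sorted_list_of_set G"

definition cell :: "real set \<Rightarrow> nat \<Rightarrow> real set" where
  "cell G j = {grid_pts G ! j <..< grid_pts G ! Suc j}"

definition Ucomp :: "(real \<Rightarrow> real) set \<Rightarrow> real set \<Rightarrow> (real \<Rightarrow> real) set" where
  "Ucomp l G = {u. \<exists>v. (\<forall>j < length (grid_pts G) - 1. v j \<in> Vspan l \<inter> C1) \<and>
       u = (\<lambda>x. \<Sum>j < length (grid_pts G) - 1. v j x * indicator (cell G j) x)}"

definition uval :: "real set \<Rightarrow> (real \<Rightarrow> real) \<Rightarrow> real \<Rightarrow> real" where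
  "uval G u q = (if q = Min G then Lim (at_right q) u
                 else if q = Max G then Lim (at_left q) u
                 else if q \<in> G then (Lim (at_right q) u + Lim (at_left q) u) / 2
                 else u q)"

definition udelta :: "(real \<Rightarrow> real) set \<Rightarrow> real set \<Rightarrow> real \<Rightarrow> real \<Rightarrow> real" where
  "udelta l G q = (THE d. d \<in> Ucomp l G \<and>
      (\<forall>w \<in> Ucomp l G. (LINT x|lborel. w x * d x) = uval G w q))"

definition uproj :: "(real \<Rightarrow> real) set \<Rightarrow> real set \<Rightarrow> (real \<Rightarrow> real) \<Rightarrow> real \<Rightarrow> real" where
  "uproj l G g = (THE p. p \<in> Ucomp l G \<and>
      (\<forall>w \<in> Ucomp l G. (LINT x|lborel. (g x - p x) * w x) = 0))"

(* piecewise derivative u' = sum v_j' chi_j *)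
definition uprime :: "real set \<Rightarrow> (real \<Rightarrow> real) \<Rightarrow> real \<Rightarrow> real" where
  "uprime G u = (\<lambda>x. if x \<in> G then 0 else deriv u x)"

definition uD :: "(real \<Rightarrow> real) set \<Rightarrow> real set \<Rightarrow> (real \<Rightarrow> real) \<Rightarrow> real \<Rightarrow> real" where
  "uD l G u = (\<lambda>x. uproj l G (uprime G u) x +
      (\<Sum>q \<in> G - {Min G, Max G}. (Lim (at_right q) u - Lim (at_left q) u) * udelta l G q x))"

definition grid_ok :: "real \<Rightarrow> real \<Rightarrow> real set \<Rightarrow> bool" where
  "grid_ok b eta G \<longleftrightarrow> finite G \<and> G \<subseteq> {-b..b} \<and> -b \<in> G \<and> b \<in> G \<and> 0 < eta \<and>
     (\<forall>j < length (grid_pts G) - 1. grid_pts G ! Suc j - grid_pts G ! j < eta)"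

end

theory Submission
  imports Defs
begin

text \<open>On a fixed grid the ultrafunction derivative \<open>D\<close> is adjoint to \<open>-d/dx\<close> against every
  \<open>C\<^sup>1\<close> function \<open>\<psi>\<close> of \<open>V\<^sub>\<lambda>\<close> vanishing at \<open>\<plusminus>\<beta>\<close>: pairing \<open>D u\<close> with \<open>\<psi>\<close>, the projection term gives
  the cellwise integrals of \<open>u'\<psi>\<close> and the Dirac terms give the jumps of \<open>u\<close> at the inner
  grid points weighted by \<open>\<psi>\<close>; integrating by parts on every cell, these jumps cancel the
  boundary terms. Iterating \<open>k\<close> times moves all derivatives onto \<open>\<phi>\<close>, so
  \<open>\<integral> D\<^sup>k(f \<chi>) \<phi> = (-1)\<^sup>k \<integral> f \<phi>\<^sup>(\<^sup>k\<^sup>) = \<langle>T, \<phi>\<rangle>\<close> as soon as \<open>\<phi>, \<dots>, \<phi>\<^sup>(\<^sup>k\<^sup>)\<close> lie in \<open>V\<^sub>\<lambda>\<close> and \<open>\<beta>\<close>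
  exceeds the support of \<open>\<phi>\<close>, which holds eventually along the ultrafilter. The projection and
  the Dirac functions exist because \<open>U(\<real>)\<close> is finite-dimensional and the \<open>L\<^sup>2\<close> form on it is
  anisotropic.\<close>

section \<open>Finite-dimensional spaces of real functions\<close>

definition fun_subspace :: "(real \<Rightarrow> real) set \<Rightarrow> bool" where
  "fun_subspace W \<longleftrightarrow> (\<lambda>x. 0) \<in> W \<and> (\<forall>u\<in>W. \<forall>w\<in>W. (\<lambda>x. u x + w x) \<in> W)
     \<and> (\<forall>c. \<forall>u\<in>W. (\<lambda>x. c * u x) \<in> W)"

lemma fun_subspaceI:
  assumes "(\<lambda>x. 0) \<in> W" "\<And>u w. u \<in> W \<Longrightarrow> w \<in> W \<Longrightarrow> (\<lambda>x. u x + w x) \<in> W"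
    and "\<And>c u. u \<in> W \<Longrightarrow> (\<lambda>x. c * u x) \<in> W"
  shows "fun_subspace W"
  using assms by (auto simp: fun_subspace_def)

lemma
  assumes "fun_subspace W"
  shows fun_subspace_0: "(\<lambda>x. 0) \<in> W"
    and fun_subspace_add: "u \<in> W \<Longrightarrow> w \<in> W \<Longrightarrow> (\<lambda>x. u x + w x) \<in> W"
    and fun_subspace_scale: "u \<in> W \<Longrightarrow> (\<lambda>x. c * u x) \<in> W"
  using assms by (auto simp: fun_subspace_def)

lemma fun_subspace_add_scale:
  "fun_subspace W \<Longrightarrow> u \<in> W \<Longrightarrow> w \<in> W \<Longrightarrow> (\<lambda>x. u x + c * w x) \<in> W"
  by (metis fun_subspace_add fun_subspace_scale)

lemma fun_subspace_diff_scale: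
  "fun_subspace W \<Longrightarrow> u \<in> W \<Longrightarrow> w \<in> W \<Longrightarrow> (\<lambda>x. u x - c * w x) \<in> W"
  using fun_subspace_add_scale[of W u w "- c"] by simp

lemma fun_subspace_sum:
  assumes "fun_subspace W" "finite Q" "\<And>q. q \<in> Q \<Longrightarrow> d q \<in> W"
  shows "(\<lambda>x. \<Sum>q\<in>Q. c q * d q x) \<in> W"
  using assms(2,3)
proof (induction Q rule: finite_induct)
  case empty
  then show ?case using fun_subspace_0[OF assms(1)] by simp
next
  case (insert q Q)
  then show ?case using fun_subspace_add_scale[OF assms(1), of "\<lambda>x. \<Sum>q\<in>Q. c q * d q x" "d q" "c q"]
    by (simp add: add.commute)
qed

lemma fun_subspace_Int: "fun_subspace V \<Longrightarrow> fun_subspace W \<Longrightarrow> fun_subspace (V \<inter> W)"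
  by (simp add: fun_subspace_def)

lemma fun_subspace_Vspan: "fun_subspace (Vspan S)"
proof (rule fun_subspaceI)
  show "(\<lambda>x. 0) \<in> Vspan S" unfolding Vspan_def by (auto intro!: exI[of _ "\<lambda>_. 0"])
next
  fix u w assume "u \<in> Vspan S" "w \<in> Vspan S"
  then obtain a b where "u = (\<lambda>x. \<Sum>g\<in>S. a g * g x)" "w = (\<lambda>x. \<Sum>g\<in>S. b g * g x)"
    by (auto simp: Vspan_def)
  then have "(\<lambda>x. u x + w x) = (\<lambda>x. \<Sum>g\<in>S. (a g + b g) * g x)"
    by (simp add: algebra_simps sum.distrib)
  then show "(\<lambda>x. u x + w x) \<in> Vspan S" by (auto simp: Vspan_def)
next
  fix c u assume "u \<in> Vspan S"
  then obtain a where "u = (\<lambda>x. \<Sum>g\<in>S. a g * g x)" by (auto simp: Vspan_def)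
  then have "(\<lambda>x. c * u x) = (\<lambda>x. \<Sum>g\<in>S. (c * a g) * g x)"
    by (simp add: sum_distrib_left mult.assoc)
  then show "(\<lambda>x. c * u x) \<in> Vspan S" by (auto simp: Vspan_def)
qed

lemma Vspan_image_sum:
  assumes "finite A"
  shows "(\<lambda>x. \<Sum>a\<in>A. c a * f a x) \<in> Vspan (f ` A)"
proof -
  have "(\<Sum>a\<in>A. c a * f a x) = (\<Sum>g\<in>f ` A. (\<Sum>a | a \<in> A \<and> f a = g. c a) * g x)" for x
    using sum.image_gen[OF assms, of "\<lambda>a. c a * f a x" f]
    by (simp add: sum_distrib_right)
  then show ?thesis
    unfolding Vspan_def by (intro CollectI exI[of _ "\<lambda>g. \<Sum>a | a \<in> A \<and> f a = g. c a"]) auto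
qed

lemma Vspan_superset:
  assumes "finite S" "g \<in> S"
  shows "g \<in> Vspan S"
proof -
  have "(\<lambda>x. \<Sum>h\<in>S. (if h = g then 1 else 0) * h x) = g"
  proof
    fix x
    have "(\<Sum>h\<in>S. (if h = g then 1 else 0) * h x) = (\<Sum>h\<in>S. if h = g then g x else 0)"
      by (rule sum.cong) auto
    then show "(\<Sum>h\<in>S. (if h = g then 1 else 0) * h x) = g x" using assms by simp
  qed
  then show ?thesis unfolding Vspan_def by (intro CollectI exI) (rule sym)
qed

lemma Vspan_insert_decompose:
  assumes "finite S" "u \<in> Vspan (insert s S)"
  obtains a where "(\<lambda>x. u x - a * s x) \<in> Vspan S"
proof (cases "s \<in> S")
  case True
  then show ?thesis using that[of 0] assms(2) by (simp add: insert_absorb)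
next
  case False
  obtain c where "u = (\<lambda>x. \<Sum>g\<in>insert s S. c g * g x)" using assms(2) by (auto simp: Vspan_def)
  then have "(\<lambda>x. u x - c s * s x) = (\<lambda>x. \<Sum>g\<in>S. c g * g x)" using False assms(1) by simp
  then show ?thesis using that[of "c s"] by (auto simp: Vspan_def)
qed

definition linear_functional_on :: "(real \<Rightarrow> real) set \<Rightarrow> ((real \<Rightarrow> real) \<Rightarrow> real) \<Rightarrow> bool" where
  "linear_functional_on W L \<longleftrightarrow> (\<forall>u\<in>W. \<forall>w\<in>W. L (\<lambda>x. u x + w x) = L u + L w)
     \<and> (\<forall>c. \<forall>u\<in>W. L (\<lambda>x. c * u x) = c * L u)"

lemma linear_functional_onI:
  assumes "\<And>u w. u \<in> W \<Longrightarrow> w \<in> W \<Longrightarrow> L (\<lambda>x. u x + w x) = L u + L w"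
    and "\<And>c u. u \<in> W \<Longrightarrow> L (\<lambda>x. c * u x) = c * L u"
  shows "linear_functional_on W L"
  using assms by (simp add: linear_functional_on_def)

lemma linear_functional_on_subset:
  "linear_functional_on W L \<Longrightarrow> V \<subseteq> W \<Longrightarrow> linear_functional_on V L"
  unfolding linear_functional_on_def by blast

lemma linear_functional_on_add_scale:
  assumes "linear_functional_on W L" "fun_subspace W" "u \<in> W" "w \<in> W"
  shows "L (\<lambda>x. u x + c * w x) = L u + c * L w"
  using assms fun_subspace_scale[OF assms(2,4)] by (simp add: linear_functional_on_def)

text \<open>Anisotropy suffices for the representation theorem below.\<close>

locale anisotropic_form =
  fixes W :: "(real \<Rightarrow> real) set" and Q :: "(real \<Rightarrow> real) \<Rightarrow> (real \<Rightarrow> real) \<Rightarrow> real"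
  assumes subspace: "fun_subspace W"
    and linear_left: "w \<in> W \<Longrightarrow> linear_functional_on W (\<lambda>u. Q u w)"
    and sym: "u \<in> W \<Longrightarrow> w \<in> W \<Longrightarrow> Q u w = Q w u"
    and anisotropic: "u \<in> W \<Longrightarrow> Q u u = 0 \<Longrightarrow> u = (\<lambda>x. 0)"
begin

lemma linear_right: "u \<in> W \<Longrightarrow> linear_functional_on W (Q u)"
  using linear_left sym fun_subspace_add[OF subspace] fun_subspace_scale[OF subspace]
  by (auto simp: linear_functional_on_def)

lemma Q_add_scale: "u \<in> W \<Longrightarrow> w \<in> W \<Longrightarrow> v \<in> W \<Longrightarrow> Q (\<lambda>x. u x + c * w x) v = Q u v + c * Q w v"
  using linear_functional_on_add_scale[OF linear_left subspace] .

lemma restrict: "fun_subspace V \<Longrightarrow> V \<subseteq> W \<Longrightarrow> anisotropic_form V Q"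
  by unfold_locales (auto intro: linear_functional_on_subset linear_left sym anisotropic)

lemma representer_unique:
  assumes "p \<in> W" "q \<in> W" "\<And>w. w \<in> W \<Longrightarrow> Q p w = Q q w"
  shows "p = q"
proof -
  define d where "d = (\<lambda>x. p x + (-1) * q x)"
  have d: "d \<in> W" unfolding d_def using fun_subspace_add_scale[OF subspace assms(1,2)] .
  have "Q d d = Q p d - Q q d" using Q_add_scale[OF assms(1,2) d, of "-1"] by (simp add: d_def)
  then have "d = (\<lambda>x. 0)" using anisotropic[OF d] assms(3)[OF d] by simp
  then show ?thesis by (simp add: d_def fun_eq_iff)
qed

lemma representer_extend:
  assumes "linear_functional_on W L" "W0 \<subseteq> W" "e \<in> W"
    and orth: "\<And>v. v \<in> W0 \<Longrightarrow> Q e v = 0"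
    and split: "\<And>w. w \<in> W \<Longrightarrow> \<exists>z\<in>W0. \<exists>t. w = (\<lambda>x. z x + t * e x)"
    and p0: "p0 \<in> W0" "\<And>w. w \<in> W0 \<Longrightarrow> Q p0 w = L w"
  shows "\<exists>p\<in>W. \<forall>w\<in>W. Q p w = L w"
proof
  define p where "p = (\<lambda>x. p0 x + (L e / Q e e) * e x)"
  have p0': "p0 \<in> W" using p0(1) assms(2) by blast
  show "p \<in> W" unfolding p_def by (rule fun_subspace_add_scale[OF subspace p0' assms(3)])
  show "\<forall>w\<in>W. Q p w = L w"
  proof
    fix w assume w: "w \<in> W"
    obtain z t where z: "z \<in> W0" and w_split: "w = (\<lambda>x. z x + t * e x)" using split[OF w] by blast
    have z': "z \<in> W" using z assms(2) by blast
    have "Q p w = Q w p0 + (L e / Q e e) * Q w e"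
      unfolding p_def Q_add_scale[OF p0' assms(3) w] by (simp add: sym[OF p0' w] sym[OF assms(3) w])
    also have "Q w p0 = L z"
      using Q_add_scale[OF z' assms(3) p0', of t] sym[OF z' p0'] orth[OF p0(1)] p0(2)[OF z]
      by (simp add: w_split)
    also have "Q w e = t * Q e e"
      using Q_add_scale[OF z' assms(3) assms(3), of t] sym[OF z' assms(3)] orth[OF z] by (simp add: w_split)
    also have "(L e / Q e e) * (t * Q e e) = t * L e"
      using anisotropic[OF assms(3)] linear_functional_on_add_scale[OF assms(1) subspace assms(3,3), of "-1"]
      by (cases "Q e e = 0") auto
    also have "L z + t * L e = L w"
      using linear_functional_on_add_scale[OF assms(1) subspace z' assms(3)] by (simp add: w_split)
    finally show "Q p w = L w" .
  qed
qed

end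

theorem representer_exists:
  assumes "finite S" "anisotropic_form W Q" "W \<subseteq> Vspan S" "linear_functional_on W L"
  shows "\<exists>p\<in>W. \<forall>w\<in>W. Q p w = L w"
  using assms
proof (induction S arbitrary: W L rule: finite_induct)
  case empty
  interpret anisotropic_form W Q by fact
  have "Vspan {} = {\<lambda>x. 0}" by (simp add: Vspan_def)
  then have W: "W = {\<lambda>x. 0}" using empty.prems(2) fun_subspace_0[OF subspace] by blast
  have "L (\<lambda>x. 0) = 0"
    using linear_functional_on_add_scale[OF empty.prems(3) subspace, of "\<lambda>x. 0" "\<lambda>x. 0" 1] W by simp
  moreover have "Q (\<lambda>x. 0) (\<lambda>x. 0) = 0"
    using Q_add_scale[of "\<lambda>x. 0" "\<lambda>x. 0" "\<lambda>x. 0" 1] W by simp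
  ultimately show ?case using W by simp
next
  case (insert s S)
  interpret anisotropic_form W Q by fact
  show ?case
  proof (cases "W \<subseteq> Vspan S")
    case True
    then show ?thesis using insert.IH insert.prems by blast
  next
    case False
    then obtain w1 where w1: "w1 \<in> W" "w1 \<notin> Vspan S" by blast
    obtain a1 where a1: "(\<lambda>x. w1 x - a1 * s x) \<in> Vspan S"
      using Vspan_insert_decompose insert.hyps(1) w1(1) insert.prems(2) by blast
    have "a1 \<noteq> 0" using a1 w1(2) by auto
    define W0 where "W0 = W \<inter> Vspan S"
    have W0: "W0 \<subseteq> W" "W0 \<subseteq> Vspan S" "anisotropic_form W0 Q"
      unfolding W0_def by (auto intro: restrict fun_subspace_Int[OF subspace fun_subspace_Vspan])
    have decompose: "\<exists>t. (\<lambda>x. w x - t * w1 x) \<in> W0" if w: "w \<in> W" for w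
    proof -
      obtain a where a: "(\<lambda>x. w x - a * s x) \<in> Vspan S"
        using Vspan_insert_decompose insert.hyps(1) w insert.prems(2) by blast
      have "(\<lambda>x. (w x - a * s x) - (a / a1) * (w1 x - a1 * s x)) \<in> Vspan S"
        using fun_subspace_diff_scale[OF fun_subspace_Vspan a a1] .
      then have "(\<lambda>x. w x - (a / a1) * w1 x) \<in> Vspan S"
        using \<open>a1 \<noteq> 0\<close> by (simp add: algebra_simps)
      then show ?thesis
        using fun_subspace_diff_scale[OF subspace w w1(1), of "a / a1"] unfolding W0_def by blast
    qed
    text \<open>\<open>r\<close> is the orthogonal projection of \<open>w1\<close> onto \<open>W0\<close>.\<close>
    obtain r where r: "r \<in> W0" "\<And>w. w \<in> W0 \<Longrightarrow> Q r w = Q w1 w"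
      using insert.IH[OF W0(3,2) linear_functional_on_subset[OF linear_right[OF w1(1)] W0(1)]] by blast
    obtain p0 where p0: "p0 \<in> W0" "\<And>w. w \<in> W0 \<Longrightarrow> Q p0 w = L w"
      using insert.IH[OF W0(3,2) linear_functional_on_subset[OF insert.prems(3) W0(1)]] by blast
    define e where "e = (\<lambda>x. w1 x - 1 * r x)"
    have e: "e \<in> W" unfolding e_def using fun_subspace_diff_scale[OF subspace w1(1)] r(1) W0(1) by blast
    show ?thesis
    proof (rule representer_extend[OF insert.prems(3) W0(1) e _ _ p0])
      show "Q e v = 0" if "v \<in> W0" for v
        using Q_add_scale[of w1 r v "-1"] r that w1(1) W0(1) by (auto simp: e_def)
      show "\<exists>z\<in>W0. \<exists>t. w = (\<lambda>x. z x + t * e x)" if w: "w \<in> W" for w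
      proof -
        obtain t where t: "(\<lambda>x. w x - t * w1 x) \<in> W0" using decompose[OF w] by blast
        define z where "z = (\<lambda>x. w x - t * w1 x + t * r x)"
        have "z \<in> W0"
          unfolding z_def using fun_subspace_add_scale[OF _ t r(1)] W0(3) anisotropic_form.subspace by blast
        moreover have "w = (\<lambda>x. z x + t * e x)" by (simp add: z_def e_def algebra_simps)
        ultimately show ?thesis by blast
      qed
    qed
  qed
qed

section \<open>\<open>C\<^sup>1\<close> functions and integrals over bounded intervals\<close>

lemma C1I: "(\<And>x. (v has_real_derivative v' x) (at x)) \<Longrightarrow> continuous_on UNIV v' \<Longrightarrow> v \<in> C1"
  by (auto simp: C1_def)

lemma
  assumes "v \<in> C1"
  shows C1_has_real_derivative: "(v has_real_derivative deriv v x) (at x)"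
    and C1_continuous_deriv: "continuous_on UNIV (deriv v)"
    and C1_continuous: "continuous_on UNIV v"
proof -
  obtain v' where v': "\<And>x. (v has_real_derivative v' x) (at x)" "continuous_on UNIV v'"
    using assms by (auto simp: C1_def)
  have "deriv v = v'" using v'(1) by (auto intro!: ext DERIV_imp_deriv)
  then show "(v has_real_derivative deriv v x) (at x)" "continuous_on UNIV (deriv v)"
    using v' by simp_all
  show "continuous_on UNIV v"
    using v'(1) by (meson DERIV_isCont continuous_at_imp_continuous_on)
qed

lemma fun_subspace_C1: "fun_subspace C1"
proof (rule fun_subspaceI)
  show "(\<lambda>x. 0) \<in> C1" by (rule C1I[where v'="\<lambda>x. 0"]) auto
  show "(\<lambda>x. u x + w x) \<in> C1" if "u \<in> C1" "w \<in> C1" for u w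
    by (rule C1I[where v'="\<lambda>x. deriv u x + deriv w x"])
      (use that in \<open>auto intro!: derivative_intros continuous_intros C1_has_real_derivative
        C1_continuous_deriv\<close>)
  show "(\<lambda>x. c * u x) \<in> C1" if "u \<in> C1" for c u
    by (rule C1I[where v'="\<lambda>x. c * deriv u x"])
      (use that in \<open>auto intro!: DERIV_cmult continuous_intros C1_has_real_derivative
        C1_continuous_deriv\<close>)
qed

lemma integrable_continuous_indicator_Ioo:
  fixes h :: "real \<Rightarrow> real"
  assumes "continuous_on UNIV h"
  shows "integrable lborel (\<lambda>x. h x * indicator {a<..<c} x)"
proof -
  have "integrable lborel (\<lambda>x. indicator {a..c} x *\<^sub>R h x)"
    by (rule borel_integrable_compact) (auto intro: continuous_on_subset[OF assms])
  then have "set_integrable lborel {a<..<c} h"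
    unfolding set_integrable_def[symmetric] by (rule set_integrable_subset) auto
  then show ?thesis by (simp add: set_integrable_def mult.commute)
qed

lemma lebesgue_integral_Ioo_eq_integral:
  fixes h :: "real \<Rightarrow> real"
  assumes "continuous_on UNIV h"
  shows "(LINT x|lborel. h x * indicator {a<..<c} x) = integral {a..c} h"
proof -
  have "(LINT x|lborel. h x * indicator {a<..<c} x) = (LINT x|lborel. indicator {a..c} x *\<^sub>R h x)"
    by (rule integral_discrete_difference[where X="{a,c}"]) (auto simp: indicator_def)
  also have "\<dots> = integral {a..c} h"
  proof -
    have "set_integrable lborel {a..c} h" unfolding set_integrable_def
      by (rule borel_integrable_compact) (auto intro: continuous_on_subset[OF assms])
    from set_borel_integral_eq_integral(2)[OF this] show ?thesis
      by (simp add: set_lebesgue_integral_def)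
  qed
  finally show ?thesis .
qed

lemma integral_Ioo_derivative:
  fixes f F :: "real \<Rightarrow> real"
  assumes "a \<le> c" "\<And>x. (F has_real_derivative f x) (at x)" "continuous_on UNIV f"
  shows "(LINT x|lborel. f x * indicator {a<..<c} x) = F c - F a"
  unfolding lebesgue_integral_Ioo_eq_integral[OF assms(3)]
  by (rule integral_unique, rule fundamental_theorem_of_calculus[OF assms(1)])
    (auto simp: has_real_derivative_iff_has_vector_derivative[symmetric]
      intro: has_field_derivative_at_within assms(2))

lemma integral_Ioo_by_parts:
  fixes v \<psi> \<psi>' :: "real \<Rightarrow> real"
  assumes "a \<le> c" "v \<in> C1" "\<And>x. (\<psi> has_real_derivative \<psi>' x) (at x)" "continuous_on UNIV \<psi>'"
  shows "(LINT x|lborel. (deriv v x * \<psi> x) * indicator {a<..<c} x) =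
    v c * \<psi> c - v a * \<psi> a - (LINT x|lborel. (v x * \<psi>' x) * indicator {a<..<c} x)"
proof -
  have "continuous_on UNIV \<psi>"
    using assms(3) by (meson DERIV_isCont continuous_at_imp_continuous_on)
  then have cont: "continuous_on UNIV (\<lambda>x. deriv v x * \<psi> x)" "continuous_on UNIV (\<lambda>x. v x * \<psi>' x)"
    using assms(4) C1_continuous[OF assms(2)] C1_continuous_deriv[OF assms(2)]
    by (auto intro!: continuous_intros)
  have "(LINT x|lborel. (deriv v x * \<psi> x + v x * \<psi>' x) * indicator {a<..<c} x) = v c * \<psi> c - v a * \<psi> a"
    by (rule integral_Ioo_derivative[OF assms(1)])
      (auto intro!: derivative_eq_intros C1_has_real_derivative assms(2,3) continuous_on_add cont)
  then show ?thesis
    by (simp add: distrib_right integrable_continuous_indicator_Ioo[OF cont(1)]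
      integrable_continuous_indicator_Ioo[OF cont(2)])
qed

lemma continuous_integral_square_Ioo_eq_0:
  fixes h :: "real \<Rightarrow> real"
  assumes "continuous_on UNIV h" "(LINT x|lborel. (h x * h x) * indicator {a<..<c} x) = 0"
    and "x \<in> {a<..<c}"
  shows "h x = 0"
proof -
  have cont: "continuous_on UNIV (\<lambda>x. h x * h x)" using assms(1) by (auto intro!: continuous_intros)
  have "integral (cbox a c) (\<lambda>x. h x * h x) = 0"
    using assms(2) lebesgue_integral_Ioo_eq_integral[OF cont] by simp
  moreover have "box a c \<noteq> {}" using assms(3) by auto
  ultimately have "\<forall>x\<in>cbox a c. h x * h x = 0"
    using integral_cbox_eq_0_iff[OF continuous_on_subset[OF cont]] by simp
  then show ?thesis using assms(3) by simp
qed

section \<open>Grids and piecewise functions\<close>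

lemma sum_boundary_telescope:
  fixes A B :: "nat \<Rightarrow> real"
  shows "(\<Sum>j<Suc n. A j - B j) + (\<Sum>j<n. B (Suc j) - A j) = A n - B 0"
  by (induction n) simp_all

locale grid =
  fixes G :: "real set" and b :: real
  assumes finite_G: "finite G" and G_subset: "G \<subseteq> {-b..b}"
    and minus_b_in_G: "-b \<in> G" and b_in_G: "b \<in> G" and b_pos: "0 < b"
begin

text \<open>\<open>\<gamma> 0 < \<dots> < \<gamma> ncells\<close> enumerate \<open>G\<close>, and \<open>cell G j\<close> is the paper's \<open>\<I>\<^sub>j\<close>.\<close>

definition ncells :: nat where "ncells = length (grid_pts G) - 1"

definition \<gamma> :: "nat \<Rightarrow> real" where "\<gamma> j = grid_pts G ! j"

lemma two_le_card_G: "2 \<le> card G"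
proof -
  have "card {-b, b} \<le> card G" using minus_b_in_G b_in_G finite_G by (intro card_mono) auto
  moreover have "card {-b, b} = 2" using b_pos by auto
  ultimately show ?thesis by simp
qed

lemma length_grid_pts: "length (grid_pts G) = Suc ncells"
  using two_le_card_G finite_G by (simp add: ncells_def grid_pts_def)

lemma ncells_pos: "0 < ncells"
  using two_le_card_G finite_G by (simp add: ncells_def grid_pts_def)

lemma \<gamma>_strict_mono: "i < j \<Longrightarrow> j \<le> ncells \<Longrightarrow> \<gamma> i < \<gamma> j"
  using sorted_wrt_nth_less[of "(<)" "grid_pts G" i j] finite_G length_grid_pts
  by (simp add: \<gamma>_def grid_pts_def)

lemma \<gamma>_mono: "i \<le> j \<Longrightarrow> j \<le> ncells \<Longrightarrow> \<gamma> i \<le> \<gamma> j"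
  using \<gamma>_strict_mono by (cases "i = j") (auto simp: less_imp_le)

lemma \<gamma>_less_iff: "i \<le> ncells \<Longrightarrow> j \<le> ncells \<Longrightarrow> \<gamma> i < \<gamma> j \<longleftrightarrow> i < j"
  using \<gamma>_strict_mono \<gamma>_mono by (meson linorder_not_le)

lemma \<gamma>_eq_iff: "i \<le> ncells \<Longrightarrow> j \<le> ncells \<Longrightarrow> \<gamma> i = \<gamma> j \<longleftrightarrow> i = j"
  using \<gamma>_less_iff by (metis linorder_neqE_nat less_irrefl)

lemma in_G_iff: "x \<in> G \<longleftrightarrow> (\<exists>j\<le>ncells. x = \<gamma> j)"
proof -
  have "x \<in> G \<longleftrightarrow> x \<in> set (grid_pts G)" using finite_G by (simp add: grid_pts_def)
  also have "\<dots> \<longleftrightarrow> (\<exists>j\<le>ncells. x = \<gamma> j)"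
    by (auto simp: in_set_conv_nth \<gamma>_def length_grid_pts less_Suc_eq_le)
  finally show ?thesis .
qed

lemma \<gamma>_in_G: "j \<le> ncells \<Longrightarrow> \<gamma> j \<in> G"
  using in_G_iff by blast

lemma \<gamma>_0: "\<gamma> 0 = -b" and \<gamma>_ncells: "\<gamma> ncells = b"
proof -
  obtain i j where ij: "i \<le> ncells" "\<gamma> i = -b" "j \<le> ncells" "\<gamma> j = b"
    using minus_b_in_G b_in_G in_G_iff by metis
  have "\<gamma> 0 \<in> {-b..b}" "\<gamma> ncells \<in> {-b..b}" using \<gamma>_in_G[of 0] \<gamma>_in_G[of ncells] G_subset by auto
  then show "\<gamma> 0 = -b" "\<gamma> ncells = b"
    using \<gamma>_mono[of 0 i] \<gamma>_mono[of j ncells] ij by auto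
qed

lemma Min_G: "Min G = -b"
  using Min_le[OF finite_G minus_b_in_G] Min_in[OF finite_G] minus_b_in_G G_subset by fastforce

lemma Max_G: "Max G = b"
  using Max_ge[OF finite_G b_in_G] Max_in[OF finite_G] b_in_G G_subset by fastforce

lemma inner_grid_points: "G - {Min G, Max G} = (\<lambda>j. \<gamma> (Suc j)) ` {..<ncells - 1}"
proof -
  have "Suc ` {..<ncells - 1} = {1..<ncells}"
    using ncells_pos by (auto simp: image_Suc_lessThan)
  then have "(\<lambda>j. \<gamma> (Suc j)) ` {..<ncells - 1} = \<gamma> ` {1..<ncells}"
    by (metis image_image)
  moreover
  have inner: "\<gamma> j \<notin> {Min G, Max G} \<longleftrightarrow> j \<in> {1..<ncells}" if "j \<le> ncells" for j
  proof -
    have "\<gamma> j = Min G \<longleftrightarrow> j = 0" "\<gamma> j = Max G \<longleftrightarrow> j = ncells"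
      using \<gamma>_eq_iff[OF that, of 0] \<gamma>_eq_iff[OF that, of ncells] by (simp_all add: Min_G Max_G \<gamma>_0 \<gamma>_ncells)
    then show ?thesis using that by auto
  qed
  have "G - {Min G, Max G} = \<gamma> ` {1..<ncells}"
  proof (intro set_eqI iffI)
    fix x assume x: "x \<in> G - {Min G, Max G}"
    then obtain j where "j \<le> ncells" "x = \<gamma> j" using in_G_iff by blast
    then show "x \<in> \<gamma> ` {1..<ncells}" using inner x by blast
  next
    fix x assume "x \<in> \<gamma> ` {1..<ncells}"
    then obtain j where "j \<in> {1..<ncells}" "x = \<gamma> j" by blast
    then show "x \<in> G - {Min G, Max G}" using inner[of j] \<gamma>_in_G[of j] by auto
  qed
  ultimately show ?thesis by simp
qed

lemma inner_grid_pointE: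
  assumes "q \<in> G - {Min G, Max G}"
  obtains j where "Suc j < ncells" "q = \<gamma> (Suc j)"
proof -
  obtain j where "j < ncells - 1" "q = \<gamma> (Suc j)" using assms unfolding inner_grid_points by blast
  moreover have "Suc j < ncells" using calculation(1) by linarith
  ultimately show ?thesis using that by blast
qed

lemma inj_on_\<gamma>_Suc: "inj_on (\<lambda>j. \<gamma> (Suc j)) {..<ncells - 1}"
  by (rule inj_onI) (use \<gamma>_eq_iff in auto)

lemma cell_eq: "cell G j = {\<gamma> j<..<\<gamma> (Suc j)}"
  by (simp add: cell_def \<gamma>_def)

lemma cell_disjoint_G:
  assumes "j < ncells" "x \<in> cell G j"
  shows "x \<notin> G"
proof
  assume "x \<in> G"
  then obtain i where i: "i \<le> ncells" "x = \<gamma> i" using in_G_iff by blast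
  then have "j < i" "i < Suc j"
    using assms \<gamma>_less_iff[of j i] \<gamma>_less_iff[of i "Suc j"] by (auto simp: cell_eq)
  then show False by simp
qed

lemma cell_subset: "j < ncells \<Longrightarrow> cell G j \<subseteq> {-b<..<b}"
  using \<gamma>_mono[of 0 j] \<gamma>_mono[of "Suc j" ncells] unfolding cell_eq \<gamma>_0 \<gamma>_ncells by auto

lemma cells_disjoint:
  assumes "i < ncells" "j < ncells" "x \<in> cell G i" "x \<in> cell G j"
  shows "i = j"
proof (rule ccontr)
  assume "i \<noteq> j"
  then have "\<gamma> (Suc i) \<le> \<gamma> j \<or> \<gamma> (Suc j) \<le> \<gamma> i"
    using \<gamma>_mono[of "Suc i" j] \<gamma>_mono[of "Suc j" i] assms(1,2) by linarith
  then show False using assms(3,4) by (auto simp: cell_eq)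
qed

lemma cells_cover:
  assumes "x \<in> {-b..b}" "x \<notin> G"
  obtains j where "j < ncells" "x \<in> cell G j"
proof -
  define S where "S = {j. j \<le> ncells \<and> \<gamma> j < x}"
  have "x \<noteq> -b" using assms minus_b_in_G by auto
  then have "0 \<in> S" using assms(1) \<gamma>_0 by (auto simp: S_def)
  have "finite S" by (simp add: S_def)
  define j where "j = Max S"
  have "j \<in> S" unfolding j_def using Max_in[OF \<open>finite S\<close>] \<open>0 \<in> S\<close> by blast
  then have j: "j \<le> ncells" "\<gamma> j < x" by (simp_all add: S_def)
  have "j \<noteq> ncells" using j(2) \<gamma>_ncells assms(1) by auto
  then have "j < ncells" using j(1) by simp
  moreover have "Suc j \<notin> S" using Max_ge[OF \<open>finite S\<close>, of "Suc j"] by (auto simp: j_def)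
  then have "\<gamma> (Suc j) \<ge> x" using \<open>j < ncells\<close> by (auto simp: S_def)
  moreover have "\<gamma> (Suc j) \<noteq> x" using \<gamma>_in_G[of "Suc j"] \<open>j < ncells\<close> assms(2) by auto
  ultimately show ?thesis using that j by (auto simp: cell_eq)
qed

definition piecewise :: "(nat \<Rightarrow> real \<Rightarrow> real) \<Rightarrow> real \<Rightarrow> real" where
  "piecewise v x = (\<Sum>j<ncells. v j x * indicator (cell G j) x)"

lemma piecewise_cell: "j < ncells \<Longrightarrow> x \<in> cell G j \<Longrightarrow> piecewise v x = v j x"
  unfolding piecewise_def
  by (subst sum.remove[of _ j]) (auto intro!: sum.neutral dest: cells_disjoint)

lemma piecewise_outside_cells: "(\<And>j. j < ncells \<Longrightarrow> x \<notin> cell G j) \<Longrightarrow> piecewise v x = 0"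
  unfolding piecewise_def by (auto intro!: sum.neutral)

lemma piecewise_outside: "x \<notin> {-b<..<b} \<Longrightarrow> piecewise v x = 0"
  using cell_subset by (intro piecewise_outside_cells) blast

lemma piecewise_mult:
  "piecewise v x * piecewise w x = piecewise (\<lambda>j x. v j x * w j x) x"
  by (cases "\<exists>j<ncells. x \<in> cell G j") (auto simp: piecewise_cell piecewise_outside_cells)

lemma piecewise_mult_right: "piecewise v x * \<psi> x = piecewise (\<lambda>j x. v j x * \<psi> x) x"
  unfolding piecewise_def sum_distrib_right by (simp only: mult_ac)

lemma piecewise_add: "piecewise v x + piecewise w x = piecewise (\<lambda>j x. v j x + w j x) x"
  unfolding piecewise_def sum.distrib[symmetric] by (simp only: distrib_right)

lemma piecewise_scale: "c * piecewise v x = piecewise (\<lambda>j x. c * v j x) x"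
  unfolding piecewise_def sum_distrib_left by (simp only: mult.assoc)

lemma piecewise_mult_restrict: "piecewise v x * piecewise (\<lambda>_. \<psi>) x = piecewise v x * \<psi> x"
  by (cases "\<exists>j<ncells. x \<in> cell G j") (auto simp: piecewise_cell piecewise_outside_cells)

lemma
  assumes "\<And>j. j < ncells \<Longrightarrow> continuous_on UNIV (h j)"
  shows integrable_piecewise: "integrable lborel (piecewise h)"
    and integral_piecewise:
      "(LINT x|lborel. piecewise h x) = (\<Sum>j<ncells. LINT x|lborel. h j x * indicator (cell G j) x)"
proof -
  have int: "integrable lborel (\<lambda>x. h j x * indicator (cell G j) x)" if "j < ncells" for j
    unfolding cell_eq by (rule integrable_continuous_indicator_Ioo[OF assms[OF that]])
  show "integrable lborel (piecewise h)"
    unfolding piecewise_def[abs_def] by (intro Bochner_Integration.integrable_sum) (simp add: int)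
  show "(LINT x|lborel. piecewise h x) = (\<Sum>j<ncells. LINT x|lborel. h j x * indicator (cell G j) x)"
    unfolding piecewise_def by (intro Bochner_Integration.integral_sum) (simp add: int)
qed

text \<open>Values on the grid itself are left free: \<open>f \<chi>\<^bsub>[-b,b]\<^esub>\<close> is piecewise \<open>C\<^sup>1\<close> only in this sense.\<close>

definition piecewise_C1 :: "(nat \<Rightarrow> real \<Rightarrow> real) \<Rightarrow> (real \<Rightarrow> real) \<Rightarrow> bool" where
  "piecewise_C1 v u \<longleftrightarrow> (\<forall>j<ncells. v j \<in> C1) \<and> (\<forall>x. x \<notin> G \<longrightarrow> u x = piecewise v x)"

lemma piecewise_C1_add:
  "piecewise_C1 v u \<Longrightarrow> piecewise_C1 v' w \<Longrightarrow> piecewise_C1 (\<lambda>j x. v j x + v' j x) (\<lambda>x. u x + w x)"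
  by (auto simp: piecewise_C1_def piecewise_add fun_subspace_add[OF fun_subspace_C1])

lemma piecewise_C1_scale: "piecewise_C1 v u \<Longrightarrow> piecewise_C1 (\<lambda>j x. c * v j x) (\<lambda>x. c * u x)"
  by (auto simp: piecewise_C1_def piecewise_scale fun_subspace_scale[OF fun_subspace_C1])

lemma piecewise_C1_restrict:
  assumes "f \<in> C1"
  shows "piecewise_C1 (\<lambda>_. f) (\<lambda>x. f x * indicator {-b..b} x)"
proof -
  have "f x * indicator {-b..b} x = piecewise (\<lambda>_. f) x" if x: "x \<notin> G" for x
  proof (cases "x \<in> {-b..b}")
    case True
    then obtain j where "j < ncells" "x \<in> cell G j" using cells_cover x by blast
    then show ?thesis using True by (simp add: piecewise_cell)
  next
    case False
    then have "x \<notin> {-b<..<b}" by auto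
    then show ?thesis using False by (simp add: piecewise_outside)
  qed
  then show ?thesis using assms by (simp add: piecewise_C1_def)
qed

lemma integral_piecewise_C1_mult:
  assumes "piecewise_C1 v u" "continuous_on UNIV \<psi>"
  shows "(LINT x|lborel. u x * \<psi> x) = (\<Sum>j<ncells. LINT x|lborel. (v j x * \<psi> x) * indicator (cell G j) x)"
proof -
  have cont: "continuous_on UNIV (\<lambda>x. v j x * \<psi> x)" if "j < ncells" for j
    using assms C1_continuous[of "v j"] that by (auto simp: piecewise_C1_def intro!: continuous_intros)
  have "u x * \<psi> x = piecewise (\<lambda>j x. v j x * \<psi> x) x" if "x \<notin> G" for x
    using assms(1) that by (simp add: piecewise_C1_def piecewise_mult_right)
  then have "(LINT x|lborel. u x * \<psi> x) = (LINT x|lborel. piecewise (\<lambda>j x. v j x * \<psi> x) x)"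
    using countable_finite[OF finite_G] by (intro integral_discrete_difference) auto
  then show ?thesis using integral_piecewise[OF cont] by simp
qed

lemma tendsto_at_right_\<gamma>:
  assumes "piecewise_C1 v u" "m < ncells"
  shows "(u \<longlongrightarrow> v m (\<gamma> m)) (at_right (\<gamma> m))"
proof -
  have "isCont (v m) (\<gamma> m)"
    using assms C1_continuous[of "v m"] by (simp add: piecewise_C1_def continuous_on_eq_continuous_at)
  then have "(v m \<longlongrightarrow> v m (\<gamma> m)) (at_right (\<gamma> m))"
    by (simp add: isCont_def filterlim_at_split)
  moreover have "eventually (\<lambda>x. x \<in> cell G m) (at_right (\<gamma> m))"
    using eventually_at_right_real[OF \<gamma>_strict_mono[of m "Suc m"]] assms(2) by (simp add: cell_eq)
  then have "eventually (\<lambda>x. v m x = u x) (at_right (\<gamma> m))"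
    by eventually_elim (use assms cell_disjoint_G in \<open>auto simp: piecewise_C1_def piecewise_cell\<close>)
  ultimately show ?thesis by (rule Lim_transform_eventually)
qed

lemma tendsto_at_left_\<gamma>:
  assumes "piecewise_C1 v u" "m < ncells"
  shows "(u \<longlongrightarrow> v m (\<gamma> (Suc m))) (at_left (\<gamma> (Suc m)))"
proof -
  have "isCont (v m) (\<gamma> (Suc m))"
    using assms C1_continuous[of "v m"] by (simp add: piecewise_C1_def continuous_on_eq_continuous_at)
  then have "(v m \<longlongrightarrow> v m (\<gamma> (Suc m))) (at_left (\<gamma> (Suc m)))"
    by (simp add: isCont_def filterlim_at_split)
  moreover have "eventually (\<lambda>x. x \<in> cell G m) (at_left (\<gamma> (Suc m)))"
    using eventually_at_left_real[OF \<gamma>_strict_mono[of m "Suc m"]] assms(2) by (simp add: cell_eq)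
  then have "eventually (\<lambda>x. v m x = u x) (at_left (\<gamma> (Suc m)))"
    by eventually_elim (use assms cell_disjoint_G in \<open>auto simp: piecewise_C1_def piecewise_cell\<close>)
  ultimately show ?thesis by (rule Lim_transform_eventually)
qed

lemma Lim_at_right_\<gamma>: "piecewise_C1 v u \<Longrightarrow> m < ncells \<Longrightarrow> Lim (at_right (\<gamma> m)) u = v m (\<gamma> m)"
  by (rule tendsto_Lim) (auto intro: tendsto_at_right_\<gamma>)

lemma Lim_at_left_\<gamma>:
  "piecewise_C1 v u \<Longrightarrow> m < ncells \<Longrightarrow> Lim (at_left (\<gamma> (Suc m))) u = v m (\<gamma> (Suc m))"
  by (rule tendsto_Lim) (auto intro: tendsto_at_left_\<gamma>)

lemma uval_inner_\<gamma>:
  assumes "piecewise_C1 v u" "Suc m < ncells"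
  shows "uval G u (\<gamma> (Suc m)) = (v (Suc m) (\<gamma> (Suc m)) + v m (\<gamma> (Suc m))) / 2"
proof -
  have "\<gamma> (Suc m) \<in> G - {Min G, Max G}" using assms(2) by (auto simp: inner_grid_points)
  then show ?thesis
    using Lim_at_right_\<gamma>[OF assms] Lim_at_left_\<gamma>[OF assms(1), of m] assms(2) by (simp add: uval_def)
qed

lemma uprime_piecewise_C1:
  assumes "piecewise_C1 v u"
  shows "uprime G u = piecewise (\<lambda>j. deriv (v j))"
proof
  fix x
  have deriv_eq: "deriv u x = deriv w x"
    if "open S" "x \<in> S" "\<And>y. y \<in> S \<Longrightarrow> w y = u y" "w \<in> C1" for S w
    using has_field_derivative_transform_within_open[OF C1_has_real_derivative[OF that(4)] that(1,2,3)]
    by (rule DERIV_imp_deriv)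
  consider "x \<in> G" | j where "j < ncells" "x \<in> cell G j" | "x \<notin> {-b..b}"
    using cells_cover by blast
  then show "uprime G u x = piecewise (\<lambda>j. deriv (v j)) x"
  proof cases
    case 1
    then have "piecewise (\<lambda>j. deriv (v j)) x = 0"
      using cell_disjoint_G by (blast intro: piecewise_outside_cells)
    then show ?thesis using 1 by (simp add: uprime_def)
  next
    case (2 j)
    have "deriv u x = deriv (v j) x"
    proof (rule deriv_eq)
      show "v j y = u y" if "y \<in> cell G j" for y
        using assms 2(1) that cell_disjoint_G by (auto simp: piecewise_C1_def piecewise_cell)
    qed (use 2 assms in \<open>auto simp: cell_eq piecewise_C1_def\<close>)
    then show ?thesis using 2 cell_disjoint_G by (simp add: uprime_def piecewise_cell)
  next
    case 3
    have "deriv u x = deriv (\<lambda>_. 0) x"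
    proof (rule deriv_eq)
      fix y assume y: "y \<in> - {-b..b}"
      then have "y \<notin> G" using G_subset by blast
      moreover have "y \<notin> {-b<..<b}" using y by auto
      ultimately show "0 = u y" using assms piecewise_outside by (simp add: piecewise_C1_def)
    qed (use 3 fun_subspace_0[OF fun_subspace_C1] in auto)
    moreover have "x \<notin> G" "x \<notin> {-b<..<b}" using 3 G_subset by auto
    ultimately show ?thesis by (simp add: uprime_def piecewise_outside)
  qed
qed

end

section \<open>Test functions\<close>

lemma deriv_iterate_vanish_outside:
  fixes \<phi> :: "real \<Rightarrow> real"
  assumes "\<And>x. R < \<bar>x\<bar> \<Longrightarrow> \<phi> x = 0" "R < \<bar>x\<bar>"
  shows "(deriv ^^ i) \<phi> x = 0"
  using assms(2)
proof (induction i arbitrary: x)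
  case 0
  then show ?case using assms(1) by simp
next
  case (Suc i)
  have "open {x::real. R < \<bar>x\<bar>}" by (rule open_Collect_less) (auto intro!: continuous_intros)
  then have "((deriv ^^ i) \<phi> has_real_derivative 0) (at x)"
    by (rule has_field_derivative_transform_within_open[where f="\<lambda>_. 0", OF DERIV_const])
      (use Suc in auto)
  then show ?case by (simp add: DERIV_imp_deriv)
qed

lemma
  assumes "test_fun \<phi>"
  shows test_fun_has_derivative: "((deriv ^^ i) \<phi> has_real_derivative (deriv ^^ Suc i) \<phi> x) (at x)"
    and test_fun_continuous: "continuous_on UNIV ((deriv ^^ i) \<phi>)"
proof -
  show der: "((deriv ^^ i) \<phi> has_real_derivative (deriv ^^ Suc i) \<phi> x) (at x)" for x
    using assms by (simp add: test_fun_def DERIV_deriv_iff_real_differentiable)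
  show "continuous_on UNIV ((deriv ^^ i) \<phi>)"
    using der by (meson DERIV_isCont continuous_at_imp_continuous_on)
qed

lemma test_fun_vanish_outside:
  assumes "test_fun \<phi>"
  obtains R where "0 \<le> R" "\<And>i x. R < \<bar>x\<bar> \<Longrightarrow> (deriv ^^ i) \<phi> x = 0"
proof -
  have "compact (closure {x. \<phi> x \<noteq> 0})" using assms unfolding test_fun_def by blast
  then have "bounded (closure {x. \<phi> x \<noteq> 0})" by (rule compact_imp_bounded)
  then obtain a where a: "\<And>x. x \<in> closure {x. \<phi> x \<noteq> 0} \<Longrightarrow> norm x \<le> a"
    unfolding bounded_iff by blast
  have vanish: "\<phi> x = 0" if "max a 0 < \<bar>x\<bar>" for x
  proof (rule ccontr)
    assume "\<phi> x \<noteq> 0"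
    then have "x \<in> closure {x. \<phi> x \<noteq> 0}" by (intro subsetD[OF closure_subset]) simp
    then have "\<bar>x\<bar> \<le> a" using a by simp
    then show False using that by linarith
  qed
  show ?thesis
  proof (rule that)
    show "0 \<le> max a 0" by simp
    show "(deriv ^^ i) \<phi> x = 0" if "max a 0 < \<bar>x\<bar>" for i x
      by (rule deriv_iterate_vanish_outside[OF vanish that])
  qed
qed

section \<open>The space \<open>U(\<real>)\<close> and its derivative\<close>

locale grid_space = grid +
  fixes l :: "(real \<Rightarrow> real) set"
  assumes finite_l: "finite l"
begin

lemma Ucomp_eq: "Ucomp l G = {u. \<exists>v. (\<forall>j<ncells. v j \<in> Vspan l \<inter> C1) \<and> u = piecewise v}"
  by (simp add: Ucomp_def ncells_def piecewise_def[abs_def])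

lemma UcompE:
  assumes "u \<in> Ucomp l G"
  obtains v where "\<And>j. j < ncells \<Longrightarrow> v j \<in> Vspan l" "\<And>j. j < ncells \<Longrightarrow> v j \<in> C1"
    "u = piecewise v"
  using assms unfolding Ucomp_eq by blast

lemma piecewise_in_Ucomp:
  "(\<And>j. j < ncells \<Longrightarrow> v j \<in> Vspan l \<inter> C1) \<Longrightarrow> piecewise v \<in> Ucomp l G"
  unfolding Ucomp_eq by blast

lemma Ucomp_piecewise_C1:
  assumes "u \<in> Ucomp l G"
  obtains v where "piecewise_C1 v u"
  using UcompE[OF assms] unfolding piecewise_C1_def by blast

lemma fun_subspace_Ucomp: "fun_subspace (Ucomp l G)"
proof (rule fun_subspaceI)
  note V = fun_subspace_Int[OF fun_subspace_Vspan fun_subspace_C1, of l]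
  have "piecewise (\<lambda>_ _. 0) \<in> Ucomp l G"
    by (intro piecewise_in_Ucomp fun_subspace_0[OF V])
  moreover have "piecewise (\<lambda>_ _. 0) = (\<lambda>x. 0)" by (simp add: fun_eq_iff piecewise_def)
  ultimately show "(\<lambda>x. 0) \<in> Ucomp l G" by simp
  fix u w c
  assume "u \<in> Ucomp l G"
  then obtain v where v: "\<forall>j<ncells. v j \<in> Vspan l \<inter> C1" "u = piecewise v"
    unfolding Ucomp_eq by blast
  have "piecewise (\<lambda>j x. c * v j x) \<in> Ucomp l G"
    using v(1) by (intro piecewise_in_Ucomp fun_subspace_scale[OF V]) auto
  then show "(\<lambda>x. c * u x) \<in> Ucomp l G" by (simp add: v(2) piecewise_scale)
  assume "w \<in> Ucomp l G"
  then obtain v' where v': "\<forall>j<ncells. v' j \<in> Vspan l \<inter> C1" "w = piecewise v'"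
    unfolding Ucomp_eq by blast
  have "piecewise (\<lambda>j x. v j x + v' j x) \<in> Ucomp l G"
    using v(1) v'(1) by (intro piecewise_in_Ucomp fun_subspace_add[OF V]) auto
  then show "(\<lambda>x. u x + w x) \<in> Ucomp l G" by (simp add: v(2) v'(2) piecewise_add)
qed

lemma Ucomp_subset_Vspan:
  "Ucomp l G \<subseteq> Vspan ((\<lambda>(j, g) x. g x * indicator (cell G j) x) ` ({..<ncells} \<times> l))"
proof
  fix u assume "u \<in> Ucomp l G"
  then obtain v where v: "\<And>j. j < ncells \<Longrightarrow> v j \<in> Vspan l" "u = piecewise v"
    using UcompE by blast
  then have "\<forall>j\<in>{..<ncells}. \<exists>c. v j = (\<lambda>x. \<Sum>g\<in>l. c g * g x)" by (auto simp: Vspan_def)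
  from bchoice[OF this] obtain c where c: "\<And>j. j < ncells \<Longrightarrow> v j = (\<lambda>x. \<Sum>g\<in>l. c j g * g x)"
    by auto
  have "u x = (\<Sum>(j, g)\<in>{..<ncells} \<times> l. c j g * (g x * indicator (cell G j) x))" for x
    unfolding v(2) piecewise_def sum.cartesian_product[symmetric]
    by (simp add: c sum_distrib_right mult.assoc del: sum_mult_indicator)
  then have "u = (\<lambda>x. \<Sum>a\<in>{..<ncells} \<times> l. (case_prod c) a * (\<lambda>(j, g) x. g x * indicator (cell G j) x) a x)"
    by (simp add: fun_eq_iff case_prod_unfold)
  then show "u \<in> Vspan ((\<lambda>(j, g) x. g x * indicator (cell G j) x) ` ({..<ncells} \<times> l))"
    using Vspan_image_sum[of "{..<ncells} \<times> l"] finite_l by simp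
qed

lemma integrable_piecewise_Ucomp_mult:
  assumes "\<And>j. j < ncells \<Longrightarrow> continuous_on UNIV (h j)" "w \<in> Ucomp l G"
  shows "integrable lborel (\<lambda>x. piecewise h x * w x)"
proof -
  obtain v where v: "\<And>j. j < ncells \<Longrightarrow> v j \<in> C1" "w = piecewise v"
    using UcompE[OF assms(2)] by metis
  have "continuous_on UNIV (\<lambda>x. h j x * v j x)" if "j < ncells" for j
    using assms(1)[OF that] C1_continuous[OF v(1)[OF that]] by (rule continuous_on_mult)
  then show ?thesis
    using integrable_piecewise[of "\<lambda>j x. h j x * v j x"] by (simp add: v(2) piecewise_mult)
qed

lemma integrable_Ucomp_mult:
  assumes "u \<in> Ucomp l G" "w \<in> Ucomp l G"
  shows "integrable lborel (\<lambda>x. u x * w x)"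
proof -
  obtain v where "\<And>j. j < ncells \<Longrightarrow> v j \<in> C1" "u = piecewise v"
    using UcompE[OF assms(1)] by metis
  then show ?thesis
    using integrable_piecewise_Ucomp_mult[OF _ assms(2), of v] C1_continuous by simp
qed

lemma Ucomp_integral_square_eq_0:
  assumes "u \<in> Ucomp l G" "(LINT x|lborel. u x * u x) = 0"
  shows "u = (\<lambda>x. 0)"
proof -
  obtain v where v: "\<And>j. j < ncells \<Longrightarrow> v j \<in> C1" "u = piecewise v"
    using UcompE[OF assms(1)] by metis
  define I where "I j = (LINT x|lborel. (v j x * v j x) * indicator (cell G j) x)" for j
  have "continuous_on UNIV (\<lambda>x. v j x * v j x)" if "j < ncells" for j
    using C1_continuous[OF v(1)[OF that]] C1_continuous[OF v(1)[OF that]] by (rule continuous_on_mult)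
  then have "(\<Sum>j<ncells. I j) = 0"
    using assms(2) integral_piecewise[of "\<lambda>j x. v j x * v j x"] by (simp add: I_def v(2) piecewise_mult)
  moreover have "0 \<le> I j" for j
    unfolding I_def by (rule Bochner_Integration.integral_nonneg) (simp add: indicator_def)
  ultimately have "I j = 0" if "j < ncells" for j
    using sum_nonneg_eq_0_iff[of "{..<ncells}" I] that by simp
  then have vanish: "v j x = 0" if "j < ncells" "x \<in> cell G j" for j x
    using continuous_integral_square_Ioo_eq_0[OF C1_continuous[OF v(1)[OF that(1)]], of "\<gamma> j" "\<gamma> (Suc j)" x] that
    unfolding I_def cell_eq by blast
  show ?thesis
  proof
    fix x
    show "u x = 0"
    proof (cases "\<exists>j<ncells. x \<in> cell G j")
      case True
      then show ?thesis using vanish v(2) piecewise_cell by auto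
    next
      case False
      then show ?thesis using v(2) piecewise_outside_cells by auto
    qed
  qed
qed

lemma anisotropic_form_L2: "anisotropic_form (Ucomp l G) (\<lambda>u w. LINT x|lborel. u x * w x)"
proof
  show "linear_functional_on (Ucomp l G) (\<lambda>u. LINT x|lborel. u x * w x)" if "w \<in> Ucomp l G" for w
    using integrable_Ucomp_mult[OF _ that]
    by (intro linear_functional_onI) (simp_all add: distrib_right mult.assoc)
qed (simp_all add: fun_subspace_Ucomp mult.commute Ucomp_integral_square_eq_0)

lemma Ucomp_representer:
  assumes "linear_functional_on (Ucomp l G) L"
  defines "p \<equiv> THE p. p \<in> Ucomp l G \<and> (\<forall>w\<in>Ucomp l G. (LINT x|lborel. p x * w x) = L w)"
  shows "p \<in> Ucomp l G \<and> (\<forall>w\<in>Ucomp l G. (LINT x|lborel. p x * w x) = L w)"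
proof -
  have "\<exists>!p. p \<in> Ucomp l G \<and> (\<forall>w\<in>Ucomp l G. (LINT x|lborel. p x * w x) = L w)"
  proof (rule ex_ex1I)
    show "\<exists>p. p \<in> Ucomp l G \<and> (\<forall>w\<in>Ucomp l G. (LINT x|lborel. p x * w x) = L w)"
      using representer_exists[OF _ anisotropic_form_L2 Ucomp_subset_Vspan assms(1)] finite_l by auto
    show "p = q" if "p \<in> Ucomp l G \<and> (\<forall>w\<in>Ucomp l G. (LINT x|lborel. p x * w x) = L w)"
      "q \<in> Ucomp l G \<and> (\<forall>w\<in>Ucomp l G. (LINT x|lborel. q x * w x) = L w)" for p q
      using that by (intro anisotropic_form.representer_unique[OF anisotropic_form_L2]) auto
  qed
  then show ?thesis unfolding p_def by (rule theI')
qed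

lemma
  assumes "\<And>w. w \<in> Ucomp l G \<Longrightarrow> integrable lborel (\<lambda>x. g x * w x)"
  shows uproj_in_Ucomp: "uproj l G g \<in> Ucomp l G"
    and integral_uproj_mult:
      "w \<in> Ucomp l G \<Longrightarrow> (LINT x|lborel. uproj l G g x * w x) = (LINT x|lborel. g x * w x)"
proof -
  define P where "P p \<longleftrightarrow> p \<in> Ucomp l G \<and>
    (\<forall>w\<in>Ucomp l G. (LINT x|lborel. p x * w x) = (LINT x|lborel. g x * w x))" for p
  have "(LINT x|lborel. (g x - p x) * w x) = (LINT x|lborel. g x * w x) - (LINT x|lborel. p x * w x)"
    if "p \<in> Ucomp l G" "w \<in> Ucomp l G" for p w
    using assms[OF that(2)] integrable_Ucomp_mult[OF that] by (simp add: left_diff_distrib)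
  then have "(\<lambda>p. p \<in> Ucomp l G \<and> (\<forall>w\<in>Ucomp l G. (LINT x|lborel. (g x - p x) * w x) = 0)) = P"
    unfolding P_def by (intro ext) auto
  then have "uproj l G g = The P" unfolding uproj_def by simp
  moreover have "P (The P)" unfolding P_def
    by (intro Ucomp_representer linear_functional_onI)
      (simp_all add: assms distrib_left mult.left_commute)
  ultimately show "uproj l G g \<in> Ucomp l G"
    "w \<in> Ucomp l G \<Longrightarrow> (LINT x|lborel. uproj l G g x * w x) = (LINT x|lborel. g x * w x)"
    by (auto simp: P_def)
qed

lemma uval_add:
  assumes "u \<in> Ucomp l G" "w \<in> Ucomp l G" "q \<in> G - {Min G, Max G}"
  shows "uval G (\<lambda>x. u x + w x) q = uval G u q + uval G w q"
proof -
  obtain j where j: "Suc j < ncells" "q = \<gamma> (Suc j)" using assms(3) by (rule inner_grid_pointE)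
  obtain v v' where v: "piecewise_C1 v u" and v': "piecewise_C1 v' w"
    using Ucomp_piecewise_C1[OF assms(1)] Ucomp_piecewise_C1[OF assms(2)] by metis
  show ?thesis
    using uval_inner_\<gamma>[OF v j(1)] uval_inner_\<gamma>[OF v' j(1)]
      uval_inner_\<gamma>[OF piecewise_C1_add[OF v v'] j(1)]
    by (simp add: j(2) field_simps)
qed

lemma uval_scale:
  assumes "u \<in> Ucomp l G" "q \<in> G - {Min G, Max G}"
  shows "uval G (\<lambda>x. c * u x) q = c * uval G u q"
proof -
  obtain j where j: "Suc j < ncells" "q = \<gamma> (Suc j)" using assms(2) by (rule inner_grid_pointE)
  obtain v where v: "piecewise_C1 v u" using Ucomp_piecewise_C1[OF assms(1)] by metis
  show ?thesis
  proof -
    have "uval G (\<lambda>x. c * u x) q * 2 = c * (uval G u q * 2)"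
      using uval_inner_\<gamma>[OF v j(1)] uval_inner_\<gamma>[OF piecewise_C1_scale[OF v, of c] j(1)]
      by (simp add: j(2) distrib_left)
    then show ?thesis by simp
  qed
qed

lemma
  assumes "q \<in> G - {Min G, Max G}"
  shows udelta_in_Ucomp: "udelta l G q \<in> Ucomp l G"
    and integral_mult_udelta: "w \<in> Ucomp l G \<Longrightarrow> (LINT x|lborel. w x * udelta l G q x) = uval G w q"
proof -
  have eq: "udelta l G q =
      (THE d. d \<in> Ucomp l G \<and> (\<forall>w\<in>Ucomp l G. (LINT x|lborel. d x * w x) = uval G w q))"
    unfolding udelta_def by (simp add: mult.commute)
  have "(THE d. d \<in> Ucomp l G \<and> (\<forall>w\<in>Ucomp l G. (LINT x|lborel. d x * w x) = uval G w q)) \<in> Ucomp l G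
      \<and> (\<forall>w\<in>Ucomp l G. (LINT x|lborel. (THE d. d \<in> Ucomp l G \<and>
        (\<forall>w\<in>Ucomp l G. (LINT x|lborel. d x * w x) = uval G w q)) x * w x) = uval G w q)"
    by (intro Ucomp_representer linear_functional_onI) (use assms uval_add uval_scale in auto)
  then show "udelta l G q \<in> Ucomp l G"
    "w \<in> Ucomp l G \<Longrightarrow> (LINT x|lborel. w x * udelta l G q x) = uval G w q"
    unfolding eq by (auto simp: mult.commute)
qed

lemma integrable_uprime_Ucomp_mult:
  assumes "piecewise_C1 v u" "w \<in> Ucomp l G"
  shows "integrable lborel (\<lambda>x. uprime G u x * w x)"
  using assms(1) unfolding uprime_piecewise_C1[OF assms(1)] piecewise_C1_def
  by (intro integrable_piecewise_Ucomp_mult[OF _ assms(2)]) (auto intro: C1_continuous_deriv)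

lemma uD_in_Ucomp:
  assumes "piecewise_C1 v u"
  shows "uD l G u \<in> Ucomp l G"
  unfolding uD_def
  by (intro fun_subspace_add[OF fun_subspace_Ucomp] fun_subspace_sum[OF fun_subspace_Ucomp]
      uproj_in_Ucomp integrable_uprime_Ucomp_mult[OF assms] udelta_in_Ucomp)
    (use finite_G in auto)

lemma integral_uD_mult:
  assumes u: "piecewise_C1 v u" and w: "w \<in> Ucomp l G"
  shows "(LINT x|lborel. uD l G u x * w x) = (LINT x|lborel. uprime G u x * w x)
    + (\<Sum>q\<in>G - {Min G, Max G}. (Lim (at_right q) u - Lim (at_left q) u) * uval G w q)"
proof -
  let ?P = "uproj l G (uprime G u)" and ?Q = "G - {Min G, Max G}"
  let ?c = "\<lambda>q. Lim (at_right q) u - Lim (at_left q) u"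
  have int_P: "integrable lborel (\<lambda>x. ?P x * w x)"
    by (intro integrable_Ucomp_mult uproj_in_Ucomp integrable_uprime_Ucomp_mult[OF u] w)
  have int_delta: "integrable lborel (\<lambda>x. ?c q * (udelta l G q x * w x))" if "q \<in> ?Q" for q
    using integrable_Ucomp_mult[OF udelta_in_Ucomp[OF that] w] by simp
  have "(LINT x|lborel. uD l G u x * w x)
      = (LINT x|lborel. ?P x * w x + (\<Sum>q\<in>?Q. ?c q * (udelta l G q x * w x)))"
    unfolding uD_def by (simp add: distrib_right sum_distrib_right mult.assoc)
  also have "\<dots> = (LINT x|lborel. ?P x * w x) + (LINT x|lborel. (\<Sum>q\<in>?Q. ?c q * (udelta l G q x * w x)))"
    using int_delta by (intro Bochner_Integration.integral_add int_P Bochner_Integration.integrable_sum) auto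
  also have "\<dots> = (LINT x|lborel. ?P x * w x) + (\<Sum>q\<in>?Q. LINT x|lborel. ?c q * (udelta l G q x * w x))"
    using int_delta by (subst Bochner_Integration.integral_sum) auto
  also have "\<dots> = (LINT x|lborel. ?P x * w x) + (\<Sum>q\<in>?Q. ?c q * (LINT x|lborel. udelta l G q x * w x))"
    by simp
  also have "\<dots> = (LINT x|lborel. uprime G u x * w x) + (\<Sum>q\<in>?Q. ?c q * uval G w q)"
    using integral_uproj_mult[OF integrable_uprime_Ucomp_mult[OF u] w] integral_mult_udelta[OF _ w]
    by (simp add: mult.commute)
  finally show ?thesis .
qed

lemma integral_uD_by_parts:
  fixes \<psi> \<psi>' :: "real \<Rightarrow> real"
  assumes u: "piecewise_C1 v u" and "\<psi> \<in> Vspan l"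
    and \<psi>: "\<And>x. (\<psi> has_real_derivative \<psi>' x) (at x)" and \<psi>': "continuous_on UNIV \<psi>'"
    and "\<psi> (-b) = 0" "\<psi> b = 0"
  shows "(LINT x|lborel. uD l G u x * \<psi> x) = - (LINT x|lborel. u x * \<psi>' x)"
proof -
  have "\<psi> \<in> C1" by (rule C1I[OF \<psi> \<psi>'])
  define \<Psi> where "\<Psi> = piecewise (\<lambda>_. \<psi>)"
  have \<Psi>: "\<Psi> \<in> Ucomp l G" "piecewise_C1 (\<lambda>_. \<psi>) \<Psi>"
    using \<open>\<psi> \<in> C1\<close> \<open>\<psi> \<in> Vspan l\<close> by (auto simp: \<Psi>_def piecewise_C1_def intro: piecewise_in_Ucomp)
  obtain n where n: "ncells = Suc n" using ncells_pos gr0_implies_Suc by blast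
  have v: "v j \<in> C1" if "j < ncells" for j using u that by (simp add: piecewise_C1_def)
  define A where "A j = v j (\<gamma> (Suc j)) * \<psi> (\<gamma> (Suc j))" for j
  define B where "B j = v j (\<gamma> j) * \<psi> (\<gamma> j)" for j
  define C where "C j = (LINT x|lborel. (v j x * \<psi>' x) * indicator (cell G j) x)" for j
  text \<open>Off the cells, \<open>uD l G u\<close> vanishes, so \<open>\<psi>\<close> may be replaced by its restriction \<open>\<Psi>\<close>.\<close>
  have "(LINT x|lborel. uD l G u x * \<psi> x) = (LINT x|lborel. uD l G u x * \<Psi> x)"
  proof -
    obtain d where "uD l G u = piecewise d" using UcompE[OF uD_in_Ucomp[OF u]] by metis
    then show ?thesis by (simp add: \<Psi>_def piecewise_mult_restrict)
  qed
  also have "\<dots> = (LINT x|lborel. uprime G u x * \<Psi> x)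
      + (\<Sum>q\<in>G - {Min G, Max G}. (Lim (at_right q) u - Lim (at_left q) u) * uval G \<Psi> q)"
    by (rule integral_uD_mult[OF u \<Psi>(1)])
  also have "(LINT x|lborel. uprime G u x * \<Psi> x) = (\<Sum>j<ncells. A j - B j - C j)"
  proof -
    have "(LINT x|lborel. uprime G u x * \<Psi> x)
        = (\<Sum>j<ncells. LINT x|lborel. (deriv (v j) x * \<psi> x) * indicator (cell G j) x)"
      using integral_piecewise[of "\<lambda>j x. deriv (v j) x * \<psi> x"] v C1_continuous_deriv
        C1_continuous[OF \<open>\<psi> \<in> C1\<close>]
      by (simp add: uprime_piecewise_C1[OF u] \<Psi>_def piecewise_mult continuous_on_mult)
    also have "\<dots> = (\<Sum>j<ncells. A j - B j - C j)"
      unfolding A_def B_def C_def cell_eq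
      by (intro sum.cong refl integral_Ioo_by_parts \<gamma>_mono v \<psi> \<psi>') auto
    finally show ?thesis .
  qed
  also have "(\<Sum>q\<in>G - {Min G, Max G}. (Lim (at_right q) u - Lim (at_left q) u) * uval G \<Psi> q)
      = (\<Sum>j<n. B (Suc j) - A j)"
    unfolding inner_grid_points
    by (subst sum.reindex[OF inj_on_\<gamma>_Suc], rule sum.cong)
      (auto simp: n A_def B_def Lim_at_right_\<gamma>[OF u] Lim_at_left_\<gamma>[OF u] uval_inner_\<gamma>[OF \<Psi>(2)]
        left_diff_distrib)
  also have "(\<Sum>j<ncells. A j - B j - C j) + (\<Sum>j<n. B (Suc j) - A j) = A n - B 0 - (\<Sum>j<ncells. C j)"
    using sum_boundary_telescope[of A B n] by (simp add: n sum_subtractf)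
  also have "A n - B 0 = 0"
    using \<open>\<psi> (-b) = 0\<close> \<open>\<psi> b = 0\<close> \<gamma>_0 \<gamma>_ncells by (simp add: A_def B_def n[symmetric])
  also have "(\<Sum>j<ncells. C j) = (LINT x|lborel. u x * \<psi>' x)"
    unfolding C_def by (rule integral_piecewise_C1_mult[OF u \<psi>', symmetric])
  finally show ?thesis by simp
qed

lemma integral_uD_iterate_by_parts:
  fixes \<phi> :: "real \<Rightarrow> real"
  assumes "\<And>i. i \<le> k \<Longrightarrow> (deriv ^^ i) \<phi> \<in> l"
    and "\<And>i x. ((deriv ^^ i) \<phi> has_real_derivative (deriv ^^ Suc i) \<phi> x) (at x)"
    and "\<And>i. continuous_on UNIV ((deriv ^^ i) \<phi>)"
    and "\<And>i. (deriv ^^ i) \<phi> (-b) = 0" "\<And>i. (deriv ^^ i) \<phi> b = 0"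
  shows "piecewise_C1 v u \<Longrightarrow> n + m \<le> k \<Longrightarrow> (LINT x|lborel. ((uD l G) ^^ m) u x * (deriv ^^ n) \<phi> x)
    = (-1) ^ m * (LINT x|lborel. u x * (deriv ^^ (n + m)) \<phi> x)"
proof (induction m arbitrary: v u n)
  case 0
  then show ?case by simp
next
  case (Suc m)
  obtain v' where v': "piecewise_C1 v' (uD l G u)"
    using Ucomp_piecewise_C1[OF uD_in_Ucomp[OF Suc.prems(1)]] .
  have "(LINT x|lborel. ((uD l G) ^^ Suc m) u x * (deriv ^^ n) \<phi> x)
      = (-1) ^ m * (LINT x|lborel. uD l G u x * (deriv ^^ (n + m)) \<phi> x)"
    using Suc.IH[OF v'] Suc.prems(2) by (simp add: funpow_Suc_right del: funpow.simps)
  also have "(LINT x|lborel. uD l G u x * (deriv ^^ (n + m)) \<phi> x)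
      = - (LINT x|lborel. u x * (deriv ^^ Suc (n + m)) \<phi> x)"
    using Vspan_superset[OF finite_l assms(1)] Suc.prems(2)
    by (intro integral_uD_by_parts[OF Suc.prems(1) _ assms(2,3,4,5)]) simp
  finally show ?case by simp
qed

lemma integral_uD_iterate_test_fun:
  assumes "test_fun \<phi>" "\<And>i x. b \<le> \<bar>x\<bar> \<Longrightarrow> (deriv ^^ i) \<phi> x = 0"
    and "\<And>i. i \<le> k \<Longrightarrow> (deriv ^^ i) \<phi> \<in> l" "f \<in> C1"
  shows "(LINT x|lborel. ((uD l G) ^^ k) (\<lambda>x. f x * indicator {-b..b} x) x * \<phi> x)
    = (-1) ^ k * (LINT x|lborel. f x * (deriv ^^ k) \<phi> x)"
proof -
  have vanish_at_b: "(deriv ^^ i) \<phi> (-b) = 0" "(deriv ^^ i) \<phi> b = 0" for i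
    using assms(2) b_pos by simp_all
  have "(LINT x|lborel. ((uD l G) ^^ k) (\<lambda>x. f x * indicator {-b..b} x) x * \<phi> x)
      = (-1) ^ k * (LINT x|lborel. f x * indicator {-b..b} x * (deriv ^^ k) \<phi> x)"
    using integral_uD_iterate_by_parts[OF assms(3) test_fun_has_derivative[OF assms(1)]
        test_fun_continuous[OF assms(1)] vanish_at_b piecewise_C1_restrict[OF assms(4)], where n=0 and m=k]
    by simp
  moreover have "f x * indicator {-b..b} x * (deriv ^^ k) \<phi> x = f x * (deriv ^^ k) \<phi> x" for x
  proof (cases "x \<in> {-b..b}")
    case False
    then have "b \<le> \<bar>x\<bar>" by auto
    then show ?thesis using assms(2) by simp
  qed simp
  ultimately show ?thesis by simp
qed

end

theorem mainTheorem15: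
  fixes U :: "(real \<Rightarrow> real) set filter"
    and \<beta> \<eta> :: "(real \<Rightarrow> real) set \<Rightarrow> real"
    and \<Gamma> :: "(real \<Rightarrow> real) set \<Rightarrow> real set"
    and T :: "(real \<Rightarrow> real) \<Rightarrow> real"
    and f \<phi> :: "real \<Rightarrow> real" and k :: nat
  assumes "fine_ultra U"
    and "\<forall>n::real. eventually (\<lambda>l. n < \<beta> l) U"
    and "\<forall>\<epsilon>>0. eventually (\<lambda>l. \<eta> l < \<epsilon>) U"
    and "eventually (\<lambda>l. grid_ok (\<beta> l) (\<eta> l) (\<Gamma> l)) U"
    and "\<forall>r::real. eventually (\<lambda>l. r \<in> \<Gamma> l) U"
    and "Cminf T"
    and "k = (LEAST k. \<exists>g\<in>C1. dist_deriv_eq T k g)"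
    and "f \<in> C1" and "dist_deriv_eq T k f"
    and "test_fun \<phi>"
  shows "eventually (\<lambda>l. (LINT x|lborel.
            ((uD l (\<Gamma> l)) ^^ k) (\<lambda>x. f x * indicator {-\<beta> l..\<beta> l} x) x * \<phi> x) = T \<phi>) U"
proof -
  obtain R where R: "0 \<le> R" "\<And>i x. R < \<bar>x\<bar> \<Longrightarrow> (deriv ^^ i) \<phi> x = 0"
    using test_fun_vanish_outside[OF assms(10)] by blast
  have "eventually (\<lambda>l. finite l \<and> grid_ok (\<beta> l) (\<eta> l) (\<Gamma> l) \<and> R < \<beta> l
      \<and> (\<lambda>i. (deriv ^^ i) \<phi>) ` {..k} \<subseteq> l) U"
    using assms(1,2,4) by (auto simp: fine_ultra_def intro!: eventually_conj)
  then show ?thesis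
  proof (rule eventually_mono)
    fix l assume l: "finite l \<and> grid_ok (\<beta> l) (\<eta> l) (\<Gamma> l) \<and> R < \<beta> l \<and> (\<lambda>i. (deriv ^^ i) \<phi>) ` {..k} \<subseteq> l"
    interpret grid_space "\<Gamma> l" "\<beta> l" l
      using l R(1) by unfold_locales (auto simp: grid_ok_def)
    have "(LINT x|lborel. ((uD l (\<Gamma> l)) ^^ k) (\<lambda>x. f x * indicator {-\<beta> l..\<beta> l} x) x * \<phi> x)
        = (-1) ^ k * (LINT x|lborel. f x * (deriv ^^ k) \<phi> x)"
      using l R(2) by (intro integral_uD_iterate_test_fun assms(8,10)) auto
    then show "(LINT x|lborel. ((uD l (\<Gamma> l)) ^^ k) (\<lambda>x. f x * indicator {-\<beta> l..\<beta> l} x) x * \<phi> x)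
        = T \<phi>"
      using assms(9,10) by (simp add: dist_deriv_eq_def)
  qed
qed

end
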